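(* Let $n\ge p$. For $\mathcal X\in\mathrm{St}(n,p,l)$ and $\mathcal V\in T_{\mathcal X}\mathrm{St}(n,p,l)$ put $\mathcal P=\mathcal I-\frac12\mathcal X*\mathcal X^\top\in\mathbb R^{n\times n\times l}$ and $\mathcal W_{\mathcal V}=\mathcal P*\mathcal V*\mathcal X^\top-\mathcal X*\mathcal V^\top*\mathcal P$ (a skew-symmetric tensor in $\mathbb R^{n\times n\times l}$). Then $$R_{\mathcal X}(\mathcal V)=\Big(\mathcal I-\tfrac12\mathcal W_{\mathcal V}\Big)^{-1}*\Big(\mathcal I+\tfrac12\mathcal W_{\mathcal V}\Big)*\mathcal X$$ is well defined and is a retraction on $\mathrm{St}(n,p,l)$.
   Context: Frontal slices $A^{(i)}=\mathcal A(:,:,i)$. The t-product is $\mathcal A*\mathcal B=\operatorname{fold}(\operatorname{bcirc}(\mathcal A)\operatorname{unfold}(\mathcal B))$, where $\operatorname{bcirc}(\mathcal A)$ is the block circulant matrix with $(i,j)$ block $A^{(((i-j)\bmod l)+1)}$, $\operatorname{unfold}$ stacks frontal slices vertically, $\operatorname{fold}$ is its inverse. Transpose: $\mathcal A^\top$ has frontal slices $(A^{(1)})^\top,(A^{(l)})^\top,\dots,(A^{(2)})^\top$. $\mathcal I$ is the identity tensor (first frontal slice identity, others zero), and $\mathcal A^{-1}$ the t-product inverse. A tensor $\mathcal W$ is skew-symmetric if $\mathcal W^\top=-\mathcal W$. $\mathrm{St}(n,p,l)=\{\mathcal X\in\mathbb R^{n\times p\times l}:\mathcal X^\top*\mathcal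 X=\mathcal I\}$, an embedded submanifold of $\mathbb R^{n\times p\times l}$. A retraction on a manifold $M$ is a smooth map $R:TM\to M$ with $R_x(0_x)=x$ and $\mathrm DR_x(0_x)=\mathrm{id}_{T_xM}$. *)

theory Defs
  imports "HOL-Analysis.Analysis"
begin

type_synonym ('n, 'p, 'l) tensor = "(((real, 'l) vec, 'p) vec, 'n) vec"

text \<open>A tensor in R^(n x p x l) is an element of type ('n, 'p, 'l) tensor,
  entry (i,j,k) being A$i$j$k; the frontal slice A^(k) is the matrix
  (\<lambda>i j. A$i$j$k).  The frontal index type 'l is an enum type; its
  elements are numbered 0,...,l-1 by their position in Enum.enum
  (for the numeral types this is the natural order).  Slice A^(k+1) in
  the paper's 1-based numbering is the slice at position k.\<close>

definition fslot :: "nat \<Rightarrow> 'l::enum" where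
  "fslot k = Enum.enum ! (k mod CARD('l))"

definition fpos :: "'l::enum \<Rightarrow> nat" where
  "fpos x = (THE k. k < CARD('l) \<and> (Enum.enum :: 'l list) ! k = x)"

text \<open>t-product: fold(bcirc(A) unfold(B)); block (k,m) of bcirc(A) is the
  slice at position (k - m) mod l.\<close>
definition tprod :: "('n::finite, 'q::finite, 'l::enum) tensor \<Rightarrow> ('q, 'p::finite, 'l) tensor \<Rightarrow> ('n, 'p, 'l) tensor" where
  "tprod A B = (\<chi> i j k. \<Sum>m\<in>UNIV. \<Sum>q\<in>UNIV.
      A$i$q$(fslot (fpos k + CARD('l::enum) - fpos m)) * B$q$j$m)"

text \<open>Transpose: slices (A^(1))^T, (A^(l))^T, ..., (A^(2))^T.\<close>
definition ttrans :: "('n::finite, 'p::finite, 'l::enum) tensor \<Rightarrow> ('p, 'n, 'l) tensor" where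
  "ttrans A = (\<chi> j i k. A$i$j$(fslot (CARD('l::enum) - fpos k)))"

definition tid :: "('n::finite, 'n::finite, 'l::enum) tensor" where
  "tid = (\<chi> i j k. if i = j \<and> fpos k = 0 then 1 else 0)"

definition tinvertible :: "('n::finite, 'n::finite, 'l::enum) tensor \<Rightarrow> bool" where
  "tinvertible A \<longleftrightarrow> (\<exists>B. tprod A B = tid \<and> tprod B A = tid)"

definition tinv :: "('n::finite, 'n::finite, 'l::enum) tensor \<Rightarrow> ('n, 'n, 'l) tensor" where
  "tinv A = (THE B. tprod A B = tid \<and> tprod B A = tid)"

definition tskew :: "('n::finite, 'n::finite, 'l::enum) tensor \<Rightarrow> bool" where
  "tskew W \<longleftrightarrow> ttrans W = - W"

definition tstiefel :: "(('n::finite, 'p::finite, 'l::enum) tensor) set" where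
  "tstiefel = {X. tprod (ttrans X) X = tid}"

text \<open>C^infinity on an open set: iterated (Frechet) derivatives of every
  order exist; D k x hs is the k-th derivative at x applied to the
  directions hs (length k).\<close>
definition smooth_on :: "'a::euclidean_space set \<Rightarrow> ('a \<Rightarrow> 'b::euclidean_space) \<Rightarrow> bool" where
  "smooth_on U f \<longleftrightarrow> open U \<and>
     (\<exists>D :: nat \<Rightarrow> 'a \<Rightarrow> 'a list \<Rightarrow> 'b.
        (\<forall>x\<in>U. D 0 x [] = f x) \<and>
        (\<forall>k x hs. x \<in> U \<and> length hs = k \<longrightarrow>
           ((\<lambda>y. D k y hs) has_derivative (\<lambda>h. D (Suc k) x (h # hs))) (at x)))"

definition smooth_on_set :: "'a::euclidean_space set \<Rightarrow> ('a \<Rightarrow> 'b::euclidean_space) \<Rightarrow> bool" where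
  "smooth_on_set S f \<longleftrightarrow>
     (\<forall>x\<in>S. \<exists>U F. x \<in> U \<and> smooth_on U F \<and> (\<forall>y\<in>U \<inter> S. F y = f y))"

definition tangent_space :: "'a::euclidean_space set \<Rightarrow> 'a \<Rightarrow> 'a set" where
  "tangent_space M x = {v. \<exists>\<gamma> e. e > 0 \<and> \<gamma> 0 = x \<and> (\<forall>t\<in>{-e<..<e}. \<gamma> t \<in> M) \<and>
       (\<gamma> has_vector_derivative v) (at 0)}"

definition tangent_bundle :: "'a::euclidean_space set \<Rightarrow> ('a \<times> 'a) set" where
  "tangent_bundle M = {(x, v). x \<in> M \<and> v \<in> tangent_space M x}"

definition is_retraction :: "'a::euclidean_space set \<Rightarrow> ('a \<Rightarrow> 'a \<Rightarrow> 'a) \<Rightarrow> bool" where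
  "is_retraction M R \<longleftrightarrow>
     smooth_on_set (tangent_bundle M) (\<lambda>(x, v). R x v) \<and>
     (\<forall>x\<in>M. \<forall>v\<in>tangent_space M x. R x v \<in> M) \<and>
     (\<forall>x\<in>M. R x 0 = x) \<and>
     (\<forall>x\<in>M. (R x has_derivative (\<lambda>v. v)) (at 0 within tangent_space M x))"

definition tP :: "('n::finite, 'p::finite, 'l::enum) tensor \<Rightarrow> ('n, 'n, 'l) tensor" where
  "tP X = tid - (1/2) *\<^sub>R tprod X (ttrans X)"

definition tW :: "('n::finite, 'p::finite, 'l::enum) tensor \<Rightarrow> ('n, 'p, 'l) tensor \<Rightarrow> ('n, 'n, 'l) tensor" where
  "tW X V = tprod (tprod (tP X) V) (ttrans X) - tprod (tprod X (ttrans V)) (tP X)"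

definition cayley_retr :: "('n::finite, 'p::finite, 'l::enum) tensor \<Rightarrow> ('n, 'p, 'l) tensor \<Rightarrow> ('n, 'p, 'l) tensor" where
  "cayley_retr X V =
     tprod (tprod (tinv (tid - (1/2) *\<^sub>R tW X V)) (tid + (1/2) *\<^sub>R tW X V)) X"

end

theory Submission
  imports Defs
begin

(*
  The block circulant map bcirc sends tensors injectively to (n l) x (p l) matrices and turns the
  t-product, transpose and identity into matrix product, transpose and identity.  Under it W_V
  becomes a skew-symmetric matrix S, so I - S/2 is injective (x = S x / 2 forces
  |x|^2 = x . S x / 2 = 0), hence invertible, and the Cayley transform (I - S/2)^-1 (I + S/2) is
  orthogonal; multiplying X by it stays on the Stiefel manifold, and W_0 = 0 gives R_X(0) = X.
  By Cramer's rule every entry of R is a rational function without poles, hence smooth.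
  Differentiating (I - W_V/2) R_X(V) = (I + W_V/2) X at V = 0 gives DR_X(0) V = W_V X, and
  W_V X = V for tangent V because tangent vectors satisfy V^T X + X^T V = 0.
*)

lemma length_enum: "length (Enum.enum :: 'l::enum list) = CARD('l)"
  by (metis distinct_card enum_UNIV enum_distinct)

lemma fpos_spec: "fpos x < CARD('l) \<and> Enum.enum ! fpos x = (x :: 'l::enum)"
  unfolding fpos_def
proof (rule theI')
  have "x \<in> set Enum.enum" by (simp add: enum_UNIV)
  then show "\<exists>!k. k < CARD('l) \<and> Enum.enum ! k = x"
    by (metis enum_distinct in_set_conv_nth length_enum nth_eq_iff_index_eq)
qed

lemma fpos_less [simp]: "fpos (x :: 'l::enum) < CARD('l)"
  using fpos_spec by blast

lemma fslot_fpos [simp]: "fslot (fpos x) = (x :: 'l::enum)"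
  using fpos_spec[of x] by (simp add: fslot_def)

lemma fpos_inject: "fpos x = fpos y \<longleftrightarrow> x = (y :: 'l::enum)"
  by (metis fslot_fpos)

lemma fpos_fslot [simp]: "fpos (fslot m :: 'l::enum) = m mod CARD('l)"
  by (metis fpos_spec enum_distinct fslot_def length_enum mod_less_divisor nth_eq_iff_index_eq
      zero_less_card_finite)

(* Slots are read as residues modulo l via fpos; slot_diff k m is k - m. *)
definition slot_diff :: "'l::enum \<Rightarrow> 'l \<Rightarrow> 'l" where
  "slot_diff k m = fslot (fpos k + CARD('l) - fpos m)"

lemma int_fpos_slot_diff:
  "int (fpos (slot_diff k m)) = (int (fpos k) - int (fpos m)) mod CARD('l)"
  for k m :: "'l::enum"
proof -
  have "int (fpos k + CARD('l) - fpos m) = (int (fpos k) - int (fpos m)) + CARD('l)"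
    using fpos_less[of m] by (simp add: of_nat_diff less_imp_le trans_le_add2)
  then show ?thesis
    by (simp add: slot_diff_def zmod_int)
qed

lemma slot_eq_iff: "x = y \<longleftrightarrow> int (fpos x) = int (fpos (y :: 'l::enum))"
  by (simp add: fpos_inject)

lemma slot_diff_cancel: "slot_diff (slot_diff s t) (slot_diff u t) = slot_diff s u"
  by (subst slot_eq_iff) (simp add: int_fpos_slot_diff mod_diff_eq)

lemma slot_diff_fslot_0 [simp]: "slot_diff k (fslot 0) = k"
  by (subst slot_eq_iff) (simp add: int_fpos_slot_diff)

lemma slot_diff_self: "slot_diff k k = fslot 0"
  by (subst slot_eq_iff) (simp add: int_fpos_slot_diff)

lemma slot_diff_inject: "slot_diff k t = slot_diff m t \<longleftrightarrow> k = m"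
  by (metis slot_diff_cancel slot_diff_fslot_0)

lemma slot_diff_eq_fslot_0_iff: "slot_diff k m = fslot 0 \<longleftrightarrow> k = m"
  by (metis slot_diff_inject slot_diff_self)

lemma slot_diff_swap: "slot_diff (fslot 0) (slot_diff k m) = slot_diff m k"
  by (subst slot_eq_iff) (simp add: int_fpos_slot_diff mod_minus_eq)

lemma bij_slot_diff: "bij (\<lambda>u. slot_diff u t)"
  using finite_UNIV_inj_surj[of "\<lambda>u. slot_diff u t"] slot_diff_inject
  by (auto simp: bij_def inj_def)

lemma fslot_neg: "fslot (CARD('l) - fpos k) = slot_diff (fslot 0) (k :: 'l::enum)"
  by (simp add: slot_diff_def)

lemma fpos_eq_0_iff: "fpos k = 0 \<longleftrightarrow> k = fslot 0"
  by (metis fpos_fslot fpos_inject mod_0)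

lemma matrix_add_rdistrib: "(A + B) ** C = A ** C + B ** C"
  for A B :: "'a::semiring_1^'n^'m"
  by (simp add: matrix_matrix_mult_def vec_eq_iff sum.distrib distrib_right)

lemma matrix_diff_ldistrib: "A ** (B - C) = A ** B - A ** C"
  for A :: "'a::ring_1^'n^'m"
  by (simp add: matrix_matrix_mult_def vec_eq_iff sum_subtractf right_diff_distrib)

lemma matrix_diff_rdistrib: "(A - B) ** C = A ** C - B ** C"
  for A B :: "'a::ring_1^'n^'m"
  by (simp add: matrix_matrix_mult_def vec_eq_iff sum_subtractf left_diff_distrib)

lemma matrix_uminus_left: "(- A) ** B = - (A ** B)"
  and matrix_uminus_right: "A ** (- B) = - (A ** B)"
  for A :: "'a::ring_1^'n^'m"
  by (simp_all add: matrix_matrix_mult_def vec_eq_iff sum_negf)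

lemma matrix_scaleR_left: "(k *\<^sub>R A) ** B = k *\<^sub>R (A ** B)"
  and matrix_scaleR_right: "A ** (k *\<^sub>R B) = k *\<^sub>R (A ** B)"
  for A :: "real^'n^'m"
  by (simp_all add: scalar_matrix_assoc matrix_scalar_ac)

lemma transpose_add: "transpose (A + B) = transpose A + transpose B"
  and transpose_diff: "transpose (A - B) = transpose A - transpose B"
  and transpose_uminus: "transpose (- A) = - transpose A"
  and transpose_zero: "transpose 0 = 0"
  for A B :: "'a::ab_group_add^'n^'m"
  by (simp_all add: transpose_def vec_eq_iff)

lemmas matrix_algebra_simps = matrix_add_ldistrib matrix_add_rdistrib matrix_diff_ldistrib
  matrix_diff_rdistrib matrix_uminus_left matrix_uminus_right matrix_scaleR_left
  matrix_scaleR_right matrix_transpose_mul transpose_add transpose_diff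
  transpose_uminus transpose_zero transpose_scalar

lemma matrix_vector_mult_uminus_left: "(- A) *v x = - (A *v x)"
  for A :: "'a::ring_1^'n^'m"
  by (simp add: matrix_vector_mult_def vec_eq_iff sum_negf)

lemma inner_skew_self:
  fixes S :: "real^'n^'n"
  assumes "transpose S = - S"
  shows "x \<bullet> (S *v x) = 0"
proof -
  have "x \<bullet> (S *v x) = (transpose S *v x) \<bullet> x"
    by (simp add: dot_lmul_matrix)
  also have "\<dots> = - (x \<bullet> (S *v x))"
    by (simp add: assms inner_commute matrix_vector_mult_uminus_left)
  finally show ?thesis
    by simp
qed

lemma invertible_id_minus_skew:
  fixes S :: "real^'n^'n"
  assumes "transpose S = - S"
  shows "invertible (mat 1 - c *\<^sub>R S)"
proof -
  have "z = 0" if "(mat 1 - c *\<^sub>R S) *v z = 0" for z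
  proof -
    have "z = c *\<^sub>R (S *v z)"
      using that by (simp add: matrix_vector_mult_diff_rdistrib scaleR_matrix_vector_assoc)
    then have "z \<bullet> z = c * (z \<bullet> (S *v z))"
      by (metis inner_scaleR_right)
    then show ?thesis
      by (simp add: inner_skew_self[OF assms])
  qed
  then have "inj ((*v) (mat 1 - c *\<^sub>R S))"
    by (intro injI) (metis eq_iff_diff_eq_0 matrix_vector_mult_diff_distrib)
  then show ?thesis
    by (simp add: invertible_left_inverse matrix_left_invertible_injective)
qed

lemma orthogonal_matrix_cayley:
  fixes S B :: "real^'n^'n"
  assumes skew: "transpose S = - S" and inverse: "B ** (mat 1 - c *\<^sub>R S) = mat 1"
  shows "orthogonal_matrix (B ** (mat 1 + c *\<^sub>R S))"
proof -
  define M where "M = mat 1 - c *\<^sub>R S"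
  define M' where "M' = mat 1 + c *\<^sub>R S"
  have BM: "B ** M = mat 1" and MB: "M ** B = mat 1"
    using inverse matrix_left_right_inverse unfolding M_def by auto
  have transpose_M': "transpose M' = M"
    by (simp add: M_def M'_def matrix_algebra_simps skew)
  have "M' ** M = M ** M'"
    by (simp add: M_def M'_def matrix_algebra_simps algebra_simps)
  then have commute: "B ** M' = M' ** B"
    by (metis BM MB matrix_mul_assoc matrix_mul_lid matrix_mul_rid)
  have "transpose B ** M' = mat 1"
    by (metis MB transpose_M' matrix_transpose_mul transpose_mat transpose_transpose)
  then have "transpose (B ** M') ** (B ** M') = mat 1"
    by (metis commute MB transpose_M' matrix_mul_assoc matrix_mul_lid matrix_transpose_mul)
  then show ?thesis
    by (simp add: orthogonal_matrix M'_def)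
qed

lemma matrix_inverse_nth_cramer:
  fixes A B :: "'a::field^'n^'n"
  assumes "A ** B = mat 1"
  shows "B $ r $ c = det (\<chi> a b. if b = r then mat 1 $ a $ c else A $ a $ b) / det A"
proof -
  have "det A \<noteq> 0"
    using assms invertible_det_nz invertible_right_inverse by blast
  moreover have "A *v column c B = (\<chi> a. mat 1 $ a $ c)"
    unfolding assms[symmetric] by (simp add: column_def matrix_vector_mult_def matrix_matrix_mult_def)
  ultimately have "column c B =
      (\<chi> k. det (\<chi> a b. if b = k then (\<chi> a. mat 1 $ a $ c) $ a else A $ a $ b) / det A)"
    using cramer by blast
  from arg_cong[OF this, of "\<lambda>v. v $ r"] show ?thesis
    by (simp add: column_def cong: if_cong)
qed

section \<open>The block circulant embedding\<close>

lemma tprod_nth: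
  "tprod A B $ i $ j $ k = (\<Sum>m\<in>UNIV. \<Sum>q\<in>UNIV. A $ i $ q $ slot_diff k m * B $ q $ j $ m)"
  by (simp add: tprod_def slot_diff_def)

definition bcirc :: "('n::finite, 'p::finite, 'l::enum) tensor \<Rightarrow> real^('p \<times> 'l)^('n \<times> 'l)" where
  "bcirc A = (\<chi> r c. A $ fst r $ fst c $ slot_diff (snd r) (snd c))"

lemma bcirc_nth [simp]: "bcirc A $ (i, s) $ (j, t) = A $ i $ j $ slot_diff s t"
  by (simp add: bcirc_def)

lemma tensor_nth_bcirc: "A $ i $ j $ k = bcirc A $ (i, k) $ (j, fslot 0)"
  by simp

lemma bcirc_eq_iff: "bcirc A = bcirc B \<longleftrightarrow> A = B"
  by (metis tensor_nth_bcirc vec_eq_iff)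

lemma bcirc_tprod: "bcirc (tprod A B) = bcirc A ** bcirc B"
proof -
  have "bcirc (tprod A B) $ (i, s) $ (j, t) = (bcirc A ** bcirc B) $ (i, s) $ (j, t)" for i s j t
  proof -
    let ?F = "\<lambda>m. \<Sum>q\<in>UNIV. A $ i $ q $ slot_diff (slot_diff s t) m * B $ q $ j $ m"
    have "bcirc (tprod A B) $ (i, s) $ (j, t) = (\<Sum>m\<in>UNIV. ?F m)"
      by (simp add: tprod_nth)
    also have "\<dots> = (\<Sum>u\<in>UNIV. ?F (slot_diff u t))"
      by (rule sum.reindex_bij_betw[symmetric]) (simp add: bij_slot_diff)
    also have "\<dots> = (\<Sum>u\<in>UNIV. \<Sum>q\<in>UNIV. A $ i $ q $ slot_diff s u * B $ q $ j $ slot_diff u t)"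
      by (simp only: slot_diff_cancel)
    also have "\<dots> = (\<Sum>q\<in>UNIV. \<Sum>u\<in>UNIV. A $ i $ q $ slot_diff s u * B $ q $ j $ slot_diff u t)"
      by (rule sum.swap)
    also have "\<dots> = (\<Sum>(q, u)\<in>UNIV. A $ i $ q $ slot_diff s u * B $ q $ j $ slot_diff u t)"
      by (simp add: sum.cartesian_product)
    also have "\<dots> = (bcirc A ** bcirc B) $ (i, s) $ (j, t)"
      by (simp add: matrix_matrix_mult_def bcirc_def case_prod_unfold)
    finally show ?thesis .
  qed
  then show ?thesis
    by (simp add: vec_eq_iff)
qed

lemma bcirc_ttrans: "bcirc (ttrans A) = transpose (bcirc A)"
  by (simp add: vec_eq_iff ttrans_def transpose_def fslot_neg slot_diff_swap)

lemma bcirc_tid: "bcirc tid = mat 1"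
  by (simp add: vec_eq_iff tid_def mat_def fpos_eq_0_iff slot_diff_eq_fslot_0_iff)

lemma bcirc_add: "bcirc (A + B) = bcirc A + bcirc B"
  and bcirc_diff: "bcirc (A - B) = bcirc A - bcirc B"
  and bcirc_uminus: "bcirc (- A) = - bcirc A"
  and bcirc_scaleR: "bcirc (c *\<^sub>R A) = c *\<^sub>R bcirc A"
  and bcirc_zero: "bcirc 0 = 0"
  by (simp_all add: vec_eq_iff bcirc_def)

lemmas bcirc_simps = bcirc_tprod bcirc_ttrans bcirc_tid bcirc_add bcirc_diff bcirc_uminus
  bcirc_scaleR bcirc_zero

lemma tprod_assoc: "tprod (tprod A B) C = tprod A (tprod B C)"
  by (simp flip: bcirc_eq_iff add: bcirc_tprod matrix_mul_assoc)

lemma tprod_tid_left [simp]: "tprod tid A = A"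
  by (simp flip: bcirc_eq_iff add: bcirc_tprod bcirc_tid)

lemma tprod_tid_right [simp]: "tprod A tid = A"
  by (simp flip: bcirc_eq_iff add: bcirc_tprod bcirc_tid)

lemma bounded_bilinear_tprod:
  "bounded_bilinear (tprod :: ('n::finite, 'q::finite, 'l::enum) tensor \<Rightarrow> ('q, 'p::finite, 'l) tensor \<Rightarrow> _)"
  unfolding bilinear_conv_bounded_bilinear[symmetric] bilinear_def
  by (auto intro!: linearI simp flip: bcirc_eq_iff simp: bcirc_simps matrix_algebra_simps)

lemma bounded_linear_ttrans: "bounded_linear ttrans"
  unfolding linear_conv_bounded_linear[symmetric]
  by (auto intro!: linearI simp flip: bcirc_eq_iff simp: bcirc_simps matrix_algebra_simps)

lemma tinvertible_iff_invertible_bcirc: "tinvertible A \<longleftrightarrow> invertible (bcirc A)"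
proof
  assume "tinvertible A"
  then show "invertible (bcirc A)"
    unfolding tinvertible_def invertible_def by (metis bcirc_tid bcirc_tprod)
next
  assume "invertible (bcirc A)"
  have "inj (tprod A)"
  proof (rule injI)
    fix B C assume "tprod A B = tprod A C"
    then have "bcirc A ** bcirc B = bcirc A ** bcirc C"
      by (metis bcirc_tprod)
    then show "B = C"
      using \<open>invertible (bcirc A)\<close>
      by (metis bcirc_eq_iff invertible_def matrix_mul_assoc matrix_mul_lid)
  qed
  then obtain B where "tprod A B = tid"
    using linear_injective_imp_surjective[of "tprod A"] bounded_bilinear.bounded_linear_right[OF bounded_bilinear_tprod]
    by (metis bounded_linear.linear surjD)
  moreover have "tprod B A = tid"
    using arg_cong[OF calculation, of bcirc]
    by (simp flip: bcirc_eq_iff add: bcirc_tprod bcirc_tid matrix_left_right_inverse)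
  ultimately show "tinvertible A"
    unfolding tinvertible_def by blast
qed

lemma tinv_tprod:
  assumes "tinvertible A"
  shows "tprod A (tinv A) = tid" and "tprod (tinv A) A = tid"
proof -
  have "\<exists>!B. tprod A B = tid \<and> tprod B A = tid"
    using assms unfolding tinvertible_def by (metis tprod_assoc tprod_tid_left tprod_tid_right)
  then have "tprod A (tinv A) = tid \<and> tprod (tinv A) A = tid"
    unfolding tinv_def by (rule theI')
  then show "tprod A (tinv A) = tid" and "tprod (tinv A) A = tid"
    by auto
qed

lemma tstiefel_iff_bcirc: "X \<in> tstiefel \<longleftrightarrow> transpose (bcirc X) ** bcirc X = mat 1"
  by (simp add: tstiefel_def flip: bcirc_eq_iff add: bcirc_simps)

lemma tskew_iff_bcirc: "tskew W \<longleftrightarrow> transpose (bcirc W) = - bcirc W"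
  by (simp add: tskew_def flip: bcirc_eq_iff add: bcirc_simps)

lemma tskew_tW: "tskew (tW X V)"
proof -
  have "transpose (bcirc (tP X)) = bcirc (tP X)"
    by (simp add: tP_def bcirc_simps matrix_algebra_simps)
  then show ?thesis
    by (simp add: tskew_iff_bcirc tW_def bcirc_simps matrix_algebra_simps matrix_mul_assoc)
qed

lemma tinvertible_tid_minus_skew: "tskew W \<Longrightarrow> tinvertible (tid - c *\<^sub>R W)"
  by (simp add: tinvertible_iff_invertible_bcirc tskew_iff_bcirc bcirc_simps invertible_id_minus_skew)

lemma cayley_mem_tstiefel:
  assumes "tskew W" and "X \<in> tstiefel"
  shows "tprod (tprod (tinv (tid - c *\<^sub>R W)) (tid + c *\<^sub>R W)) X \<in> tstiefel"
proof -
  define Q where "Q = bcirc (tprod (tinv (tid - c *\<^sub>R W)) (tid + c *\<^sub>R W))"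
  have "bcirc (tinv (tid - c *\<^sub>R W)) ** (mat 1 - c *\<^sub>R bcirc W) = mat 1"
    using tinv_tprod(2)[OF tinvertible_tid_minus_skew[OF assms(1)], of c]
    by (metis bcirc_diff bcirc_scaleR bcirc_tid bcirc_tprod)
  then have "orthogonal_matrix Q"
    using orthogonal_matrix_cayley assms(1) by (simp add: Q_def tskew_iff_bcirc bcirc_simps)
  then have "transpose (Q ** bcirc X) ** (Q ** bcirc X) = mat 1"
    using assms(2)
    by (simp add: orthogonal_matrix tstiefel_iff_bcirc matrix_transpose_mul matrix_mul_assoc)
       (metis matrix_mul_assoc matrix_mul_lid)
  then show ?thesis
    by (simp add: tstiefel_iff_bcirc Q_def bcirc_tprod)
qed

lemma tinv_tid: "tinv tid = tid"
  using tinv_tprod(1)[of tid] by (auto simp: tinvertible_def)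

lemma tW_zero: "tW X 0 = 0"
  by (simp add: tW_def flip: bcirc_eq_iff add: bcirc_simps matrix_algebra_simps)

lemma cayley_retr_zero: "cayley_retr X 0 = X"
  by (simp add: cayley_retr_def tW_zero tinv_tid)

lemma tangent_space_tstiefel_skew:
  assumes "V \<in> tangent_space tstiefel X"
  shows "tprod (ttrans V) X + tprod (ttrans X) V = 0"
proof -
  obtain \<gamma> e where "e > 0" and "\<gamma> 0 = X" and \<gamma>_in: "\<forall>t\<in>{-e<..<e}. \<gamma> t \<in> tstiefel"
    and "(\<gamma> has_vector_derivative V) (at 0)"
    using assms unfolding tangent_space_def by blast
  then have \<gamma>': "(\<gamma> has_derivative (\<lambda>t. t *\<^sub>R V)) (at 0)"
    by (simp add: has_vector_derivative_def)
  have "((\<lambda>t. tprod (ttrans (\<gamma> t)) (\<gamma> t)) has_derivative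
      (\<lambda>t. tprod (ttrans (\<gamma> 0)) (t *\<^sub>R V) + tprod (ttrans (t *\<^sub>R V)) (\<gamma> 0))) (at 0)"
    by (rule bounded_bilinear.FDERIV[OF bounded_bilinear_tprod
          bounded_linear.has_derivative[OF bounded_linear_ttrans \<gamma>'] \<gamma>'])
  moreover have "((\<lambda>t. tprod (ttrans (\<gamma> t)) (\<gamma> t)) has_derivative (\<lambda>t. 0)) (at 0)"
  proof (rule has_derivative_transform_within_open[OF has_derivative_const[of tid]])
    show "0 \<in> {-e<..<e}" using \<open>e > 0\<close> by simp
  qed (use \<gamma>_in in \<open>auto simp: tstiefel_def\<close>)
  ultimately have "(\<lambda>t. tprod (ttrans (\<gamma> 0)) (t *\<^sub>R V) + tprod (ttrans (t *\<^sub>R V)) (\<gamma> 0)) = (\<lambda>t. 0)"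
    by (rule has_derivative_unique)
  from fun_cong[OF this, of 1] show ?thesis
    using \<open>\<gamma> 0 = X\<close> by (simp add: add.commute)
qed

lemma tprod_tW_tangent:
  assumes "X \<in> tstiefel" and "tprod (ttrans V) X + tprod (ttrans X) V = 0"
  shows "tprod (tW X V) X = V"
proof -
  define x where "x = bcirc X"
  define y where "y = bcirc V"
  have xx: "transpose x ** x = mat 1"
    using assms(1) by (simp add: x_def tstiefel_iff_bcirc)
  have yx: "transpose y ** x = - (transpose x ** y)"
    using arg_cong[OF assms(2), of bcirc]
    by (simp add: x_def y_def bcirc_simps eq_neg_iff_add_eq_0)
  have "bcirc (tprod (tW X V) X) = y"
    by (simp add: tW_def tP_def bcirc_simps matrix_algebra_simps xx yx algebra_simps
        flip: x_def y_def matrix_mul_assoc)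
  then show ?thesis
    by (simp add: y_def bcirc_eq_iff)
qed

lemma bounded_linear_tW: "bounded_linear (tW X)"
  unfolding linear_conv_bounded_linear[symmetric]
  by (auto intro!: linearI simp flip: bcirc_eq_iff
      simp: tW_def bcirc_simps matrix_algebra_simps algebra_simps)

section \<open>Rational maps are smooth\<close>

(* Rational functions without poles: closed under differentiation, hence smooth. *)
inductive_set rational_functions :: "('a::real_normed_vector \<Rightarrow> real) set" where
  const: "(\<lambda>x. c) \<in> rational_functions"
| linear: "bounded_linear f \<Longrightarrow> f \<in> rational_functions"
| add: "f \<in> rational_functions \<Longrightarrow> g \<in> rational_functions \<Longrightarrow> (\<lambda>x. f x + g x) \<in> rational_functions"
| mult: "f \<in> rational_functions \<Longrightarrow> g \<in> rational_functions \<Longrightarrow> (\<lambda>x. f x * g x) \<in> rational_functions"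
| inverse: "f \<in> rational_functions \<Longrightarrow> (\<forall>x. f x \<noteq> 0) \<Longrightarrow> (\<lambda>x. inverse (f x)) \<in> rational_functions"

lemma rational_functions_uminus: "f \<in> rational_functions \<Longrightarrow> (\<lambda>x. - f x) \<in> rational_functions"
  using rational_functions.mult[OF rational_functions.const[of "-1"]] by simp

lemma rational_functions_diff:
  "f \<in> rational_functions \<Longrightarrow> g \<in> rational_functions \<Longrightarrow> (\<lambda>x. f x - g x) \<in> rational_functions"
  using rational_functions.add[OF _ rational_functions_uminus] by simp

lemma rational_functions_divide:
  "f \<in> rational_functions \<Longrightarrow> g \<in> rational_functions \<Longrightarrow> \<forall>x. g x \<noteq> 0 \<Longrightarrow>
    (\<lambda>x. f x / g x) \<in> rational_functions"
  using rational_functions.mult[OF _ rational_functions.inverse] by (simp add: divide_inverse)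

lemma rational_functions_sum:
  "finite S \<Longrightarrow> (\<And>s. s \<in> S \<Longrightarrow> f s \<in> rational_functions) \<Longrightarrow>
    (\<lambda>x. \<Sum>s\<in>S. f s x) \<in> rational_functions"
  by (induction S rule: finite_induct) (auto intro: rational_functions.intros)

lemma rational_functions_prod:
  "finite S \<Longrightarrow> (\<And>s. s \<in> S \<Longrightarrow> f s \<in> rational_functions) \<Longrightarrow>
    (\<lambda>x. \<Prod>s\<in>S. f s x) \<in> rational_functions"
  by (induction S rule: finite_induct) (auto intro: rational_functions.intros)

lemma rational_functions_has_derivative:
  "f \<in> rational_functions \<Longrightarrow>
    \<exists>f'. (\<forall>x. (f has_derivative f' x) (at x)) \<and> (\<forall>h. (\<lambda>x. f' x h) \<in> rational_functions)"
proof (induction rule: rational_functions.induct)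
  case (const c)
  show ?case
    by (rule exI[of _ "\<lambda>x h. 0"]) (auto intro: rational_functions.const)
next
  case (linear f)
  show ?case
    by (rule exI[of _ "\<lambda>x. f"])
       (auto intro: rational_functions.const bounded_linear_imp_has_derivative[OF linear])
next
  case (add f g)
  then obtain f' g' where "\<forall>x. (f has_derivative f' x) (at x)" "\<forall>h. (\<lambda>x. f' x h) \<in> rational_functions"
    and "\<forall>x. (g has_derivative g' x) (at x)" "\<forall>h. (\<lambda>x. g' x h) \<in> rational_functions"
    by blast
  then show ?case
    by (intro exI[of _ "\<lambda>x h. f' x h + g' x h"]) (auto intro!: has_derivative_add rational_functions.add)
next
  case (mult f g)
  then obtain f' g' where "\<forall>x. (f has_derivative f' x) (at x)" "\<forall>h. (\<lambda>x. f' x h) \<in> rational_functions"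
    and "\<forall>x. (g has_derivative g' x) (at x)" "\<forall>h. (\<lambda>x. g' x h) \<in> rational_functions"
    by blast
  with mult.hyps show ?case
    by (intro exI[of _ "\<lambda>x h. f x * g' x h + f' x h * g x"])
       (auto intro!: has_derivative_mult rational_functions.add rational_functions.mult)
next
  case (inverse f)
  then obtain f' where f': "\<forall>x. (f has_derivative f' x) (at x)" "\<forall>h. (\<lambda>x. f' x h) \<in> rational_functions"
    by blast
  have "((\<lambda>x. inverse (f x)) has_derivative (\<lambda>h. - (inverse (f x) * f' x h * inverse (f x)))) (at x)" for x
    using has_derivative_compose[OF f'(1)[rule_format] has_derivative_inverse'[of "f x" UNIV]] inverse.hyps
    by simp
  moreover have "(\<lambda>x. - (inverse (f x) * f' x h * inverse (f x))) \<in> rational_functions" for h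
    by (intro rational_functions_uminus rational_functions.mult rational_functions.inverse inverse.hyps
        f'(2)[rule_format])
  ultimately show ?case
    by (intro exI[of _ "\<lambda>x h. - (inverse (f x) * f' x h * inverse (f x))"]) blast
qed

definition rational_map :: "('a::real_normed_vector \<Rightarrow> 'b::euclidean_space) \<Rightarrow> bool" where
  "rational_map f \<longleftrightarrow> (\<forall>b\<in>Basis. (\<lambda>x. f x \<bullet> b) \<in> rational_functions)"

lemma rational_map_has_derivative:
  assumes "rational_map f"
  shows "\<exists>f'. (\<forall>x. (f has_derivative f' x) (at x)) \<and> (\<forall>h. rational_map (\<lambda>x. f' x h))"
proof -
  have ex: "\<forall>b\<in>Basis. \<exists>d. (\<forall>x. ((\<lambda>x. f x \<bullet> b) has_derivative d x) (at x))
      \<and> (\<forall>h. (\<lambda>x. d x h) \<in> rational_functions)"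
    using assms rational_functions_has_derivative unfolding rational_map_def by blast
  obtain d where d: "\<And>b. b \<in> Basis \<Longrightarrow> (\<forall>x. ((\<lambda>x. f x \<bullet> b) has_derivative d b x) (at x))
      \<and> (\<forall>h. (\<lambda>x. d b x h) \<in> rational_functions)"
    using bchoice[OF ex] by blast
  define f' where "f' x h = (\<Sum>b\<in>Basis. d b x h *\<^sub>R b)" for x h
  have "((\<lambda>x. \<Sum>b\<in>Basis. (f x \<bullet> b) *\<^sub>R b) has_derivative f' x) (at x)" for x
    unfolding f'_def by (intro has_derivative_sum has_derivative_scaleR_left) (use d in blast)
  then have "(f has_derivative f' x) (at x)" for x
    by (simp add: euclidean_representation)
  moreover have "rational_map (\<lambda>x. f' x h)" for h
    using d by (simp add: rational_map_def f'_def inner_sum_left inner_Basis if_distrib sum.delta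
        cong: if_cong)
  ultimately show ?thesis
    by blast
qed

lemma smooth_on_rational_map:
  fixes f :: "'a::euclidean_space \<Rightarrow> 'b::euclidean_space"
  assumes "rational_map f"
  shows "smooth_on UNIV f"
proof -
  have ex: "\<forall>g :: 'a \<Rightarrow> 'b. \<exists>g'. rational_map g \<longrightarrow>
      (\<forall>x. (g has_derivative g' x) (at x)) \<and> (\<forall>h. rational_map (\<lambda>x. g' x h))"
    using rational_map_has_derivative by blast
  obtain d where d: "\<And>g :: 'a \<Rightarrow> 'b. rational_map g \<Longrightarrow>
      (\<forall>x. (g has_derivative d g x) (at x)) \<and> (\<forall>h. rational_map (\<lambda>x. d g x h))"
    using choice[OF ex] by blast
  define D where "D hs = foldr (\<lambda>h g x. d g x h) hs f" for hs
  have D_rational: "rational_map (D hs)" for hs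
    by (induction hs) (simp_all add: D_def assms d)
  show ?thesis
    unfolding smooth_on_def
  proof (intro conjI exI[of _ "\<lambda>k x hs. D hs x"] allI impI ballI)
    fix k x hs
    show "((\<lambda>y. D hs y) has_derivative (\<lambda>h. D (h # hs) x)) (at x)"
      using d[OF D_rational[of hs]] by (simp add: D_def)
  qed (simp_all add: D_def)
qed

lemma rational_functions_det:
  "(\<And>a b. (\<lambda>x. A x $ a $ b) \<in> rational_functions) \<Longrightarrow> (\<lambda>x. det (A x)) \<in> rational_functions"
  unfolding det_def
  by (auto intro!: rational_functions_sum rational_functions_prod rational_functions.mult
      rational_functions.const finite_permutations)

definition rational_tensor :: "('a::real_normed_vector \<Rightarrow> ('n::finite, 'p::finite, 'l::enum) tensor) \<Rightarrow> bool" where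
  "rational_tensor f \<longleftrightarrow> (\<forall>i j k. (\<lambda>x. f x $ i $ j $ k) \<in> rational_functions)"

lemma rational_map_rational_tensor: "rational_tensor f \<Longrightarrow> rational_map f"
  for f :: "'a::real_normed_vector \<Rightarrow> ('n::finite, 'p::finite, 'l::enum) tensor"
  unfolding rational_map_def rational_tensor_def
proof
  fix b :: "('n, 'p, 'l) tensor"
  assume entries: "\<forall>i j k. (\<lambda>x. f x $ i $ j $ k) \<in> rational_functions" and "b \<in> Basis"
  then obtain i j k where "b = axis i (axis j (axis k 1))"
    by (auto simp: Basis_vec_def)
  then have "(\<lambda>x. f x \<bullet> b) = (\<lambda>x. f x $ i $ j $ k)"
    by (simp add: inner_axis)
  then show "(\<lambda>x. f x \<bullet> b) \<in> rational_functions"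
    using entries by simp
qed

lemma rational_tensor_const: "rational_tensor (\<lambda>x. C)"
  by (simp add: rational_tensor_def rational_functions.const)

lemma rational_tensor_linear: "bounded_linear f \<Longrightarrow> rational_tensor f"
  unfolding rational_tensor_def
  by (auto intro!: rational_functions.linear bounded_linear_compose[OF bounded_linear_vec_nth])

lemma rational_tensor_add: "rational_tensor f \<Longrightarrow> rational_tensor g \<Longrightarrow> rational_tensor (\<lambda>x. f x + g x)"
  by (simp add: rational_tensor_def rational_functions.add)

lemma rational_tensor_diff: "rational_tensor f \<Longrightarrow> rational_tensor g \<Longrightarrow> rational_tensor (\<lambda>x. f x - g x)"
  by (simp add: rational_tensor_def rational_functions_diff)

lemma rational_tensor_scaleR: "rational_tensor f \<Longrightarrow> rational_tensor (\<lambda>x. c *\<^sub>R f x)"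
  by (simp add: rational_tensor_def rational_functions.mult rational_functions.const)

lemma rational_tensor_ttrans: "rational_tensor f \<Longrightarrow> rational_tensor (\<lambda>x. ttrans (f x))"
  by (simp add: rational_tensor_def ttrans_def)

lemma rational_tensor_tprod:
  "rational_tensor f \<Longrightarrow> rational_tensor g \<Longrightarrow> rational_tensor (\<lambda>x. tprod (f x) (g x))"
  by (auto simp: rational_tensor_def tprod_def intro!: rational_functions_sum rational_functions.mult)

lemma rational_tensor_tinv:
  assumes rational: "rational_tensor A" and invertible: "\<And>x. tinvertible (A x)"
  shows "rational_tensor (\<lambda>x. tinv (A x))"
  unfolding rational_tensor_def
proof (intro allI)
  fix i j k
  let ?M = "\<lambda>x. bcirc (A x)"
  let ?N = "\<lambda>x. \<chi> a b. if b = (i, k) then mat 1 $ a $ (j, fslot 0) else ?M x $ a $ b"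
  have M_entries: "(\<lambda>x. ?M x $ r $ c) \<in> rational_functions" for r c
    using rational by (simp add: rational_tensor_def bcirc_def)
  have "(\<lambda>x. ?N x $ r $ c) \<in> rational_functions" for r c
    by (cases "c = (i, k)") (simp_all add: rational_functions.const M_entries)
  moreover have "det (?M x) \<noteq> 0" for x
    using invertible by (simp add: tinvertible_iff_invertible_bcirc invertible_det_nz)
  moreover have "tinv (A x) $ i $ j $ k = det (?N x) / det (?M x)" for x
  proof -
    have "?M x ** bcirc (tinv (A x)) = mat 1"
      using tinv_tprod(1)[OF invertible] by (metis bcirc_tprod bcirc_tid)
    then show ?thesis
      unfolding tensor_nth_bcirc[of "tinv (A x)"] by (rule matrix_inverse_nth_cramer)
  qed
  ultimately show "(\<lambda>x. tinv (A x) $ i $ j $ k) \<in> rational_functions"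
    by (simp add: M_entries rational_functions_divide rational_functions_det)
qed

lemma rational_tensor_tW:
  "rational_tensor X \<Longrightarrow> rational_tensor V \<Longrightarrow> rational_tensor (\<lambda>x. tW (X x) (V x))"
  unfolding tW_def tP_def
  by (intro rational_tensor_diff rational_tensor_tprod rational_tensor_ttrans rational_tensor_scaleR
      rational_tensor_const)

lemma rational_tensor_cayley_retr: "rational_tensor (\<lambda>z. cayley_retr (fst z) (snd z))"
proof -
  have "rational_tensor fst" and "rational_tensor snd"
    by (simp_all add: rational_tensor_linear bounded_linear_fst bounded_linear_snd)
  then show ?thesis
    unfolding cayley_retr_def
    by (intro rational_tensor_tprod rational_tensor_tinv rational_tensor_add rational_tensor_diff
        rational_tensor_scaleR rational_tensor_tW rational_tensor_const
        tinvertible_tid_minus_skew tskew_tW)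
qed

section \<open>Differential of the Cayley retraction\<close>

lemma has_derivative_at_within_cong:
  assumes "(f has_derivative f') (at x)" and "bounded_linear g"
    and "\<And>y. y \<in> S \<Longrightarrow> f' (y - x) = g (y - x)"
  shows "(f has_derivative g) (at x within S)"
proof -
  let ?q = "\<lambda>D y. (1 / norm (y - x)) *\<^sub>R (f y - (f x + D (y - x)))"
  have "(?q f' \<longlongrightarrow> 0) (at x within S)"
    using has_derivative_at_withinI[OF assms(1)] unfolding has_derivative_within by blast
  moreover have "\<forall>\<^sub>F y in at x within S. ?q f' y = ?q g y"
    unfolding eventually_at_filter by (rule always_eventually) (simp add: assms(3))
  ultimately have "(?q g \<longlongrightarrow> 0) (at x within S)"
    by (rule Lim_transform_eventually)
  with assms(2) show ?thesis
    unfolding has_derivative_within by blast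
qed

lemma cayley_retr_differentiable: "cayley_retr X differentiable (at 0)"
proof -
  obtain F' where F': "((\<lambda>z. cayley_retr (fst z) (snd z)) has_derivative F') (at (X, 0))"
    using rational_map_has_derivative[OF rational_map_rational_tensor[OF rational_tensor_cayley_retr]]
    by blast
  have "(cayley_retr X has_derivative (\<lambda>h. F' (0, h))) (at 0)"
    using has_derivative_compose[OF has_derivative_Pair[OF has_derivative_const has_derivative_ident] F']
    by simp
  then show ?thesis
    unfolding differentiable_def by blast
qed

lemma tprod_cayley_retr:
  "tprod (tid - (1/2) *\<^sub>R tW X V) (cayley_retr X V) = tprod (tid + (1/2) *\<^sub>R tW X V) X"
  by (simp add: cayley_retr_def tinv_tprod(1)[OF tinvertible_tid_minus_skew[OF tskew_tW]]
      flip: tprod_assoc)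

lemma cayley_retr_has_derivative: "(cayley_retr X has_derivative (\<lambda>V. tprod (tW X V) X)) (at 0)"
proof -
  let ?R = "cayley_retr X"
  let ?W = "\<lambda>V. (1/2) *\<^sub>R tW X V"
  obtain R' where R': "(?R has_derivative R') (at 0)"
    using cayley_retr_differentiable unfolding differentiable_def by blast
  have W': "(?W has_derivative ?W) (at 0)"
    by (rule has_derivative_scaleR_right[OF bounded_linear_imp_has_derivative[OF bounded_linear_tW]])
  have "((\<lambda>V. tprod (tid + ?W V) X) has_derivative
      (\<lambda>h. tprod (tid + ?W 0) 0 + tprod (0 + ?W h) X)) (at 0)"
    by (rule bounded_bilinear.FDERIV[OF bounded_bilinear_tprod
        has_derivative_add[OF has_derivative_const W'] has_derivative_const])
  then have "((\<lambda>V. tprod (tid - ?W V) (?R V)) has_derivative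
      (\<lambda>h. tprod (tid + ?W 0) 0 + tprod (0 + ?W h) X)) (at 0)"
    by (simp add: tprod_cayley_retr)
  moreover have "((\<lambda>V. tprod (tid - ?W V) (?R V)) has_derivative
      (\<lambda>h. tprod (tid - ?W 0) (R' h) + tprod (0 - ?W h) (?R 0))) (at 0)"
    by (rule bounded_bilinear.FDERIV[OF bounded_bilinear_tprod
        has_derivative_diff[OF has_derivative_const W'] R'])
  ultimately have derivatives_eq: "(\<lambda>h. tprod (tid + ?W 0) 0 + tprod (0 + ?W h) X)
      = (\<lambda>h. tprod (tid - ?W 0) (R' h) + tprod (0 - ?W h) (?R 0))"
    by (rule has_derivative_unique)
  have "R' h = tprod (tW X h) X" for h
  proof -
    have "tprod (?W h) X = R' h + tprod (- ?W h) X"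
      using fun_cong[OF derivatives_eq, of h]
      by (simp add: tW_zero cayley_retr_zero bounded_bilinear.zero_right[OF bounded_bilinear_tprod])
    then have "R' h = tprod (?W h) X - tprod (- ?W h) X"
      by (simp add: eq_diff_eq)
    also have "\<dots> = tprod (?W h - - ?W h) X"
      by (simp only: bounded_bilinear.diff_left[OF bounded_bilinear_tprod])
    also have "\<dots> = tprod (tW X h) X"
      by (simp flip: scaleR_add_left)
    finally show ?thesis .
  qed
  then have "R' = (\<lambda>V. tprod (tW X V) X)"
    by (rule ext)
  with R' show ?thesis
    by simp
qed

theorem mainTheorem7:
  assumes "CARD('p) \<le> CARD('n)"
  shows "(\<forall>X\<in>(tstiefel :: (('n::finite, 'p::finite, 'l::enum) tensor) set). \<forall>V\<in>tangent_space tstiefel X.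
            tskew (tW X V) \<and> tinvertible (tid - (1/2) *\<^sub>R tW X V))
         \<and> is_retraction (tstiefel :: (('n, 'p, 'l::enum) tensor) set) cayley_retr"
proof (intro conjI ballI)
  (* n \<ge> p only makes the Stiefel manifold nonempty; the argument does not need it. *)
  fix X V :: "('n, 'p, 'l) tensor"
  show "tskew (tW X V)" and "tinvertible (tid - (1/2) *\<^sub>R tW X V)"
    by (simp_all add: tskew_tW tinvertible_tid_minus_skew)
next
  have "smooth_on_set (tangent_bundle tstiefel) (\<lambda>(X, V). cayley_retr X V)"
    using smooth_on_rational_map[OF rational_map_rational_tensor[OF rational_tensor_cayley_retr]]
    unfolding smooth_on_set_def by (intro ballI exI[of _ UNIV]) (auto simp: case_prod_beta')
  moreover have "cayley_retr X V \<in> tstiefel" if "X \<in> tstiefel" for X V :: "('n, 'p, 'l) tensor"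
    unfolding cayley_retr_def by (rule cayley_mem_tstiefel[OF tskew_tW that])
  moreover have "(cayley_retr X has_derivative (\<lambda>V. V)) (at 0 within tangent_space tstiefel X)"
    if "X \<in> tstiefel" for X :: "('n, 'p, 'l) tensor"
    using cayley_retr_has_derivative bounded_linear_ident
    by (rule has_derivative_at_within_cong)
       (simp add: that tprod_tW_tangent tangent_space_tstiefel_skew)
  ultimately show "is_retraction tstiefel (cayley_retr :: ('n, 'p, 'l) tensor \<Rightarrow> _)"
    unfolding is_retraction_def by (simp add: cayley_retr_zero)
qed

end
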